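(* Let $\alpha,\beta_1,\beta_2,\gamma_1,\gamma_2\in\widehat{\mathbb{F}_q^\times}$. (i) Suppose $\varepsilon\notin\{\alpha,\beta_2,\beta_1\overline{\gamma_1},\beta_2\overline{\gamma_2}\}$. Then for every $\lambda\in\mathbb{F}_q$, $$F_2\!\left({\alpha;\beta_1,\beta_2\atop\gamma_1,\gamma_2};\lambda,1\right)=\frac{(\overline{\beta_2}\gamma_2)_{\overline{\alpha}}}{(\gamma_2)^\circ_{\overline{\alpha}}}\,{}_3F_2\!\left({\alpha,\beta_1,\alpha\overline{\gamma_2}\atop\gamma_1,\alpha\beta_2\overline{\gamma_2}};\lambda\right).$$ (ii) Suppose $\varepsilon\notin\{\alpha,\beta_1,\beta_2,\beta_1\overline{\gamma_1},\beta_2\overline{\gamma_2}\}$. Then for every $\lambda\in\mathbb{F}_q\setminus\{1\}$, $$F_2\!\left({\alpha;\beta_1,\beta_2\atop\gamma_1,\gamma_2};\lambda,1-\lambda\right)=\frac{(\overline{\beta_2}\gamma_2)_{\overline{\alpha}}}{(\gamma_2)^\circ_{\overline{\alpha}}}\,\overline{\alpha}(1-\lambda)\,{}_3F_2\!\left({\alpha,\overline{\beta_1}\gamma_1,\alpha\overline{\gamma_2}\atop\gamma_1,\alpha\beta_2\overline{\gamma_2}};\frac{\lambda}{\lambda-1}\right).$$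
   Context: $\mathbb{F}_q$ is a finite field with $q$ elements. $\widehat{\mathbb{F}_q^\times}$ is the group of multiplicative characters $\mathbb{F}_q^\times\to\overline{\mathbb{Q}}^\times$, $\varepsilon$ the trivial character; every character (including $\varepsilon$) is extended by $0$ at $0$; $\overline{\eta}=\eta^{-1}$; $\delta(\eta)=1$ if $\eta=\varepsilon$, else $0$. $\psi$ is a fixed non-trivial additive character. $g(\eta)=-\sum_{x\in\mathbb{F}_q^\times}\psi(x)\eta(x)$, $g^\circ(\eta)=q^{\delta(\eta)}g(\eta)$, $(\alpha)_\nu=g(\alpha\nu)/g(\alpha)$, $(\alpha)^\circ_\nu=g^\circ(\alpha\nu)/g^\circ(\alpha)$. For $\lambda\in\mathbb{F}_q$, ${}_3F_2\!\left({\alpha_1,\alpha_2,\alpha_3\atop\beta_1,\beta_2};\lambda\right)=\frac{1}{1-q}\sum_{\nu}\frac{(\alpha_1)_\nu(\alpha_2)_\nu(\alpha_3)_\nu}{(\varepsilon)^\circ_\nu(\beta_1)^\circ_\nu(\beta_2)^\circ_\nu}\nu(\lambda)$; for $x,y\in\mathbb{F}_q$, $F_2\!\left({\alpha;\beta_1,\beta_2\atop\gamma_1,\gamma_2};x,y\right)=\frac{1}{(1-q)^2}\sum_{\nu_1,\nu_2}\frac{(\alpha)_{\nu_1\nu_2}(\beta_1)_{\nu_1}(\beta_2)_{\nu_2}}{(\gamma_1)^\circ_{\nu_1}(\gamma_2)^\circ_{\nu_2}(\varepsilon)^\circ_{\nu_1}(\varepsilon)^\circ_{\nu_2}}\nu_1(x)\nu_2(y)$,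 sums over characters. *)

theory Defs
  imports Complex_Main
begin

text \<open>Multiplicative characters of a finite field 'a, with values in complex numbers
  (a model of the algebraic closure of Q), extended by 0 at 0 (also the trivial one).\<close>

definition mult_chars :: "('a::{field,finite} \<Rightarrow> complex) set" where
  "mult_chars = {\<chi>. \<chi> 0 = 0 \<and> \<chi> 1 = 1 \<and> (\<forall>x y. \<chi> (x * y) = \<chi> x * \<chi> y)}"

definition eps_char :: "'a::{field,finite} \<Rightarrow> complex" where
  "eps_char x = (if x = 0 then 0 else 1)"

definition chmul :: "('a \<Rightarrow> complex) \<Rightarrow> ('a \<Rightarrow> complex) \<Rightarrow> 'a \<Rightarrow> complex" where
  "chmul \<chi> \<eta> x = \<chi> x * \<eta> x"

definition chinv :: "('a \<Rightarrow> complex) \<Rightarrow> 'a \<Rightarrow> complex" where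
  "chinv \<chi> x = inverse (\<chi> x)"

definition delta_char :: "('a::{field,finite} \<Rightarrow> complex) \<Rightarrow> nat" where
  "delta_char \<eta> = (if \<eta> = eps_char then 1 else 0)"

definition add_char :: "('a::{field,finite} \<Rightarrow> complex) \<Rightarrow> bool" where
  "add_char \<psi> \<longleftrightarrow> (\<forall>x y. \<psi> (x + y) = \<psi> x * \<psi> y) \<and> (\<forall>x. \<psi> x \<noteq> 0)"

definition gauss :: "('a::{field,finite} \<Rightarrow> complex) \<Rightarrow> ('a \<Rightarrow> complex) \<Rightarrow> complex" where
  "gauss \<psi> \<eta> = - (\<Sum>x\<in>UNIV - {0}. \<psi> x * \<eta> x)"

definition gauss0 :: "('a::{field,finite} \<Rightarrow> complex) \<Rightarrow> ('a \<Rightarrow> complex) \<Rightarrow> complex" where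
  "gauss0 \<psi> \<eta> = of_nat (card (UNIV::'a set)) ^ delta_char \<eta> * gauss \<psi> \<eta>"

definition poch :: "('a::{field,finite} \<Rightarrow> complex) \<Rightarrow> ('a \<Rightarrow> complex) \<Rightarrow> ('a \<Rightarrow> complex) \<Rightarrow> complex" where
  "poch \<psi> \<alpha> \<nu> = gauss \<psi> (chmul \<alpha> \<nu>) / gauss \<psi> \<alpha>"

definition poch0 :: "('a::{field,finite} \<Rightarrow> complex) \<Rightarrow> ('a \<Rightarrow> complex) \<Rightarrow> ('a \<Rightarrow> complex) \<Rightarrow> complex" where
  "poch0 \<psi> \<alpha> \<nu> = gauss0 \<psi> (chmul \<alpha> \<nu>) / gauss0 \<psi> \<alpha>"

definition hyp3F2 :: "('a::{field,finite} \<Rightarrow> complex) \<Rightarrow> ('a \<Rightarrow> complex) \<Rightarrow> ('a \<Rightarrow> complex)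
    \<Rightarrow> ('a \<Rightarrow> complex) \<Rightarrow> ('a \<Rightarrow> complex) \<Rightarrow> ('a \<Rightarrow> complex) \<Rightarrow> 'a \<Rightarrow> complex" where
  "hyp3F2 \<psi> a1 a2 a3 b1 b2 z =
     1 / (1 - of_nat (card (UNIV::'a set))) *
     (\<Sum>\<nu>\<in>mult_chars. poch \<psi> a1 \<nu> * poch \<psi> a2 \<nu> * poch \<psi> a3 \<nu>
        / (poch0 \<psi> eps_char \<nu> * poch0 \<psi> b1 \<nu> * poch0 \<psi> b2 \<nu>) * \<nu> z)"

definition appellF2 :: "('a::{field,finite} \<Rightarrow> complex) \<Rightarrow> ('a \<Rightarrow> complex) \<Rightarrow> ('a \<Rightarrow> complex)
    \<Rightarrow> ('a \<Rightarrow> complex) \<Rightarrow> ('a \<Rightarrow> complex) \<Rightarrow> ('a \<Rightarrow> complex) \<Rightarrow> 'a \<Rightarrow> 'a \<Rightarrow> complex" where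
  "appellF2 \<psi> a b1 b2 c1 c2 x y =
     1 / (1 - of_nat (card (UNIV::'a set)))^2 *
     (\<Sum>\<nu>1\<in>mult_chars. \<Sum>\<nu>2\<in>mult_chars.
        poch \<psi> a (chmul \<nu>1 \<nu>2) * poch \<psi> b1 \<nu>1 * poch \<psi> b2 \<nu>2
        / (poch0 \<psi> c1 \<nu>1 * poch0 \<psi> c2 \<nu>2 * poch0 \<psi> eps_char \<nu>1 * poch0 \<psi> eps_char \<nu>2)
        * \<nu>1 x * \<nu>2 y)"

end

theory Submission
  imports Defs "HOL-Algebra.Multiplicative_Group" "HOL-Algebra.Algebraic_Closure_Type"
begin

text \<open>
  Summing the double series of \<open>F\<^sub>2\<close> over one of its two characters first writes it as a
  single character sum of \<open>\<^sub>2F\<^sub>1\<close> functions whose first parameter is \<open>\<alpha>\<nu>\<close>. The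
  two \<open>\<^sub>2F\<^sub>1\<close> identities needed both come from the finite field analogue of Euler's
  integral representation, which in turn comes from writing the Pochhammer quotients as Jacobi
  sums and using the orthogonality of characters. At argument \<open>1\<close> the Gauss summation theorem
  evaluates every \<open>\<^sub>2F\<^sub>1(\<alpha>\<nu>, \<beta>\<^sub>2; \<gamma>\<^sub>2; 1)\<close>; the reflection formula
  \<open>g\<degree>(\<chi>) g(\<chi>\<inverse>) = \<chi>(-1) q\<close> splits off the factor that does not depend on \<open>\<nu>\<close>, and the
  rest is the \<open>\<^sub>3F\<^sub>2\<close> series. This is (i). For (ii), the Pfaff transformation
  \<open>\<^sub>2F\<^sub>1(a, b; c; z) = a\<inverse>(1 - z) \<^sub>2F\<^sub>1(a, b\<inverse>c; c; z/(z - 1))\<close>, applied to every term,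
  turns \<open>F\<^sub>2(z, 1 - z)\<close> into \<open>\<alpha>\<inverse>(1 - z) F\<^sub>2(z/(z - 1), 1)\<close>, and (i) applies.
\<close>

section \<open>Multiplicative characters\<close>

lemma mult_char_zero: "\<chi> \<in> mult_chars \<Longrightarrow> \<chi> 0 = 0"
  by (simp add: mult_chars_def)

lemma mult_char_one: "\<chi> \<in> mult_chars \<Longrightarrow> \<chi> 1 = 1"
  by (simp add: mult_chars_def)

lemma mult_char_mult: "\<chi> \<in> mult_chars \<Longrightarrow> \<chi> (x * y) = \<chi> x * \<chi> y"
  by (simp add: mult_chars_def)

lemma mult_char_inverse:
  assumes "\<chi> \<in> mult_chars"
  shows "\<chi> (inverse x) = inverse (\<chi> x)"
proof (cases "x = 0")
  case True
  then show ?thesis using mult_char_zero[OF assms] by simp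
next
  case False
  then have "\<chi> x * \<chi> (inverse x) = 1"
    using assms by (metis mult_char_mult mult_char_one right_inverse)
  then show ?thesis by (simp add: inverse_unique)
qed

lemma mult_char_nonzero: "\<chi> \<in> mult_chars \<Longrightarrow> x \<noteq> 0 \<Longrightarrow> \<chi> x \<noteq> 0"
  by (metis mult_char_mult mult_char_one mult_zero_left right_inverse zero_neq_one)

lemma mult_char_power: "\<chi> \<in> mult_chars \<Longrightarrow> \<chi> (x ^ k) = \<chi> x ^ k"
  by (induction k) (simp_all add: mult_char_one mult_char_mult)

lemma mult_char_minus_one_squared: "\<chi> \<in> mult_chars \<Longrightarrow> \<chi> (-1) * \<chi> (-1) = 1"
  by (metis mult_char_mult mult_char_one mult_minus1_right minus_minus)

lemma chinv_apply: "\<chi> \<in> mult_chars \<Longrightarrow> chinv \<chi> x = \<chi> (inverse x)"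
  by (simp add: chinv_def mult_char_inverse)

lemma chinv_minus_one: "\<chi> \<in> mult_chars \<Longrightarrow> chinv \<chi> (-1) = \<chi> (-1)"
  by (simp add: chinv_apply)

lemma eps_char_in_mult_chars: "eps_char \<in> mult_chars"
  by (auto simp: mult_chars_def eps_char_def)

lemma chmul_in_mult_chars: "\<chi> \<in> mult_chars \<Longrightarrow> \<eta> \<in> mult_chars \<Longrightarrow> chmul \<chi> \<eta> \<in> mult_chars"
  by (auto simp: mult_chars_def chmul_def)

lemma chinv_in_mult_chars: "\<chi> \<in> mult_chars \<Longrightarrow> chinv \<chi> \<in> mult_chars"
  by (auto simp: mult_chars_def chinv_def)

lemma mult_chars_eqI:
  assumes "\<chi> \<in> mult_chars" "\<eta> \<in> mult_chars" "\<And>x. x \<noteq> 0 \<Longrightarrow> \<chi> x = \<eta> x"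
  shows "\<chi> = \<eta>"
proof
  show "\<chi> x = \<eta> x" for x
    using assms by (cases "x = 0") (simp_all add: mult_char_zero)
qed

lemma chmul_commute: "chmul \<chi> \<eta> = chmul \<eta> \<chi>"
  by (auto simp: chmul_def fun_eq_iff)

lemma chmul_assoc: "chmul (chmul \<chi> \<eta>) \<mu> = chmul \<chi> (chmul \<eta> \<mu>)"
  by (auto simp: chmul_def fun_eq_iff)

lemma chinv_chinv [simp]: "chinv (chinv \<chi>) = \<chi>"
  by (auto simp: chinv_def fun_eq_iff)

lemma chinv_chmul: "chinv (chmul \<chi> \<eta>) = chmul (chinv \<chi>) (chinv \<eta>)"
  by (auto simp: chinv_def chmul_def fun_eq_iff)

lemma chinv_eps_char [simp]: "chinv eps_char = eps_char"
  by (auto simp: chinv_def eps_char_def fun_eq_iff)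

lemma chinv_eq_eps_char_iff: "chinv \<chi> = eps_char \<longleftrightarrow> \<chi> = eps_char"
  by (metis chinv_chinv chinv_eps_char)

lemma chmul_chinv_eq_eps_char_iff:
  "chmul (chinv \<chi>) \<eta> = eps_char \<longleftrightarrow> chmul \<chi> (chinv \<eta>) = eps_char"
proof -
  have "chmul (chinv \<chi>) \<eta> = chinv (chmul \<chi> (chinv \<eta>))"
    by (simp add: chinv_chmul chmul_commute)
  then show ?thesis by (simp add: chinv_eq_eps_char_iff)
qed

lemma chmul_eps_char_left: "\<chi> \<in> mult_chars \<Longrightarrow> chmul eps_char \<chi> = \<chi>"
  by (rule mult_chars_eqI) (simp_all add: chmul_in_mult_chars eps_char_in_mult_chars chmul_def eps_char_def)

lemma chmul_eps_char_right: "\<chi> \<in> mult_chars \<Longrightarrow> chmul \<chi> eps_char = \<chi>"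
  by (simp add: chmul_commute chmul_eps_char_left)

lemma chmul_chinv: "\<chi> \<in> mult_chars \<Longrightarrow> chmul \<chi> (chinv \<chi>) = eps_char"
  by (rule mult_chars_eqI)
    (simp_all add: chmul_in_mult_chars chinv_in_mult_chars eps_char_in_mult_chars
      chmul_def chinv_def eps_char_def mult_char_nonzero)

lemma chinv_chmul_cancel:
  "\<chi> \<in> mult_chars \<Longrightarrow> \<eta> \<in> mult_chars \<Longrightarrow> chmul (chinv \<chi>) (chmul \<chi> \<eta>) = \<eta>"
  by (simp add: chmul_assoc[symmetric] chmul_commute[of "chinv \<chi>"] chmul_chinv chmul_eps_char_left)

lemma chmul_chinv_cancel:
  "\<chi> \<in> mult_chars \<Longrightarrow> \<eta> \<in> mult_chars \<Longrightarrow> chmul \<chi> (chmul (chinv \<chi>) \<eta>) = \<eta>"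
  by (simp add: chmul_assoc[symmetric] chmul_chinv chmul_eps_char_left)

lemma mult_char_neq_eps_charE:
  assumes "\<chi> \<in> mult_chars" "\<chi> \<noteq> eps_char"
  obtains a where "a \<noteq> 0" "\<chi> a \<noteq> 1"
  using assms by (metis eps_char_def eps_char_in_mult_chars mult_chars_eqI)

section \<open>The multiplicative group of a finite field\<close>

lemma card_UNIV_field_ge_two: "2 \<le> card (UNIV :: 'a::{field,finite} set)"
proof -
  have "card {0::'a, 1} \<le> card (UNIV :: 'a set)" by (rule card_mono) auto
  then show ?thesis by simp
qed

lemma ring_of_type_algebra_simps:
  "carrier (ring_of_type_algebra :: 'a::field ring) = UNIV"
  "\<zero>\<^bsub>(ring_of_type_algebra :: 'a ring)\<^esub> = 0"
  "\<one>\<^bsub>(ring_of_type_algebra :: 'a ring)\<^esub> = 1"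
  "x [^]\<^bsub>(ring_of_type_algebra :: 'a ring)\<^esub> n = x ^ n"
  by (simp_all add: ring_of_type_algebra_def) (induction n, simp_all add: ring_of_type_algebra_def)

lemma power_card_minus_one_eq_one:
  fixes x :: "'a::{field,finite}"
  assumes "x \<noteq> 0"
  shows "x ^ (card (UNIV :: 'a set) - 1) = 1"
proof -
  interpret F: field "ring_of_type_algebra :: 'a ring" ..
  \<comment> \<open>qualified, since \<open>Ring_Divisibility\<close> and \<open>Polynomial\<close> also declare \<open>mult_of\<close> and \<open>order\<close>\<close>
  let ?G = "Multiplicative_Group.mult_of (ring_of_type_algebra :: 'a ring)"
  interpret G: group ?G by (rule F.field_mult_group)
  have "x [^]\<^bsub>?G\<^esub> Coset.order ?G = \<one>\<^bsub>?G\<^esub>"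
    by (rule G.pow_order_eq_1) (simp add: assms ring_of_type_algebra_simps)
  then show ?thesis
    by (simp add: F.order_mult_of Coset.order_def Multiplicative_Group.nat_pow_mult_of
      ring_of_type_algebra_simps)
qed

definition mult_generator :: "'a::field \<Rightarrow> bool" where
  "mult_generator g \<longleftrightarrow> g \<noteq> 0 \<and> (\<forall>x. x \<noteq> 0 \<longrightarrow> (\<exists>i. x = g ^ i))"

lemma exists_mult_generator: "\<exists>g::'a::{field,finite}. mult_generator g"
proof -
  interpret F: field "ring_of_type_algebra :: 'a ring" ..
  have fin: "finite (carrier (ring_of_type_algebra :: 'a ring))" by simp
  have "\<exists>g\<in>UNIV - {0::'a}. UNIV - {0} = {g ^ i | i. i \<in> UNIV}"
    using F.finite_field_mult_group_has_gen[OF fin]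
    unfolding Multiplicative_Group.carrier_mult_of Multiplicative_Group.nat_pow_mult_of
      ring_of_type_algebra_simps .
  then obtain g :: 'a where "g \<noteq> 0" and gen: "UNIV - {0} = {g ^ i | i. i \<in> UNIV}"
    by blast
  have "\<exists>i. x = g ^ i" if "x \<noteq> 0" for x
  proof -
    have "x \<in> UNIV - {0}" using that by simp
    then have "x \<in> {g ^ i | i. i \<in> UNIV}" by (simp only: gen)
    then show ?thesis by simp
  qed
  with \<open>g \<noteq> 0\<close> show ?thesis by (auto simp: mult_generator_def)
qed

lemma mult_generator_power_eq_one_iff:
  fixes g :: "'a::{field,finite}"
  assumes "mult_generator g"
  shows "g ^ m = 1 \<longleftrightarrow> (card (UNIV :: 'a set) - 1) dvd m"
proof -
  define n where "n = card (UNIV :: 'a set) - 1"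
  have g0: "g \<noteq> 0" and gen: "\<And>x. x \<noteq> 0 \<Longrightarrow> \<exists>i. x = g ^ i"
    using assms by (auto simp: mult_generator_def)
  have n_pos: "0 < n" using card_UNIV_field_ge_two[where 'a='a] by (simp add: n_def)
  have pow_mod: "g ^ k = g ^ (k mod n)" for k
  proof -
    have "g ^ k = g ^ (n * (k div n) + k mod n)" by simp
    also have "\<dots> = (g ^ n) ^ (k div n) * g ^ (k mod n)" by (simp only: power_add power_mult)
    also have "g ^ n = 1"
      unfolding n_def by (rule power_card_minus_one_eq_one[OF g0])
    finally show ?thesis by simp
  qed
  have "UNIV - {0} \<subseteq> (\<lambda>i. g ^ i) ` {..<n}"
  proof
    fix x :: 'a
    assume "x \<in> UNIV - {0}"
    then obtain i where "x = g ^ (i mod n)" using gen pow_mod by blast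
    then show "x \<in> (\<lambda>i. g ^ i) ` {..<n}" using n_pos by simp
  qed
  moreover have "(\<lambda>i. g ^ i) ` {..<n} \<subseteq> UNIV - {0}" using g0 by auto
  ultimately have "(\<lambda>i. g ^ i) ` {..<n} = UNIV - {0}" by (rule antisym[rotated])
  then have inj: "inj_on (\<lambda>i. g ^ i) {..<n}"
    by (intro eq_card_imp_inj_on) (simp_all add: card_Diff_singleton n_def)
  have "m mod n \<in> {..<n}" "0 \<in> {..<n}" using n_pos by auto
  then have "g ^ (m mod n) = g ^ 0 \<longleftrightarrow> m mod n = 0"
    using inj_onD[OF inj] by auto
  then show ?thesis
    unfolding pow_mod[of m] mod_eq_0_iff_dvd n_def by simp
qed

lemma mult_generator_power_cong:
  fixes g :: "'a::{field,finite}" and w :: complex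
  assumes g: "mult_generator g" and w: "w ^ (card (UNIV :: 'a set) - 1) = 1"
    and "g ^ i = g ^ j"
  shows "w ^ i = w ^ j"
proof -
  have "w ^ i = w ^ (i + d)" if "g ^ i = g ^ (i + d)" for i d
  proof -
    have "g ^ i * g ^ d = g ^ i * 1" using that by (simp add: power_add)
    then have "g ^ d = 1" using g by (simp add: mult_generator_def)
    then obtain k where "d = (card (UNIV :: 'a set) - 1) * k"
      using mult_generator_power_eq_one_iff[OF g] by blast
    then have "w ^ d = 1" using w by (simp add: power_mult)
    then show ?thesis by (simp add: power_add)
  qed
  moreover obtain d where "j = i + d \<or> i = j + d"
    by (metis le_Suc_ex nat_le_linear)
  ultimately show ?thesis using \<open>g ^ i = g ^ j\<close> by metis
qed

lemma exists_mult_char_at_mult_generator: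
  fixes g :: "'a::{field,finite}" and w :: complex
  assumes g: "mult_generator g" and w: "w ^ (card (UNIV :: 'a set) - 1) = 1"
  shows "\<exists>\<chi>\<in>mult_chars. \<chi> g = w"
proof -
  have g0: "g \<noteq> 0" and gen: "\<And>x. x \<noteq> 0 \<Longrightarrow> \<exists>i. x = g ^ i"
    using g by (auto simp: mult_generator_def)
  define \<chi> where "\<chi> x = (if x = 0 then 0 else w ^ (SOME i. x = g ^ i))" for x
  have \<chi>_power: "\<chi> (g ^ i) = w ^ i" for i
  proof -
    define j where "j = (SOME j. g ^ i = g ^ j)"
    have "g ^ i = g ^ j" unfolding j_def by (rule someI) (rule refl)
    moreover have "\<chi> (g ^ i) = w ^ j" using g0 by (simp add: \<chi>_def j_def)
    ultimately show ?thesis using mult_generator_power_cong[OF g w] by metis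
  qed
  have "\<chi> \<in> mult_chars"
    unfolding mult_chars_def
  proof (intro CollectI conjI allI)
    show "\<chi> 0 = 0" by (simp add: \<chi>_def)
    show "\<chi> 1 = 1" using \<chi>_power[of 0] by simp
    fix x y :: 'a
    show "\<chi> (x * y) = \<chi> x * \<chi> y"
    proof (cases "x = 0 \<or> y = 0")
      case True
      then show ?thesis by (auto simp: \<chi>_def)
    next
      case False
      then obtain i j where "x = g ^ i" "y = g ^ j" using gen by blast
      then show ?thesis using \<chi>_power[of "i + j"] by (simp add: power_add \<chi>_power)
    qed
  qed
  moreover have "\<chi> g = w" using \<chi>_power[of 1] by simp
  ultimately show ?thesis by blast
qed

lemma exists_mult_char_neq_one:
  fixes t :: "'a::{field,finite}"
  assumes "t \<noteq> 0" "t \<noteq> 1"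
  shows "\<exists>\<chi>\<in>mult_chars. \<chi> t \<noteq> 1"
proof -
  define n where "n = card (UNIV :: 'a set) - 1"
  have n_pos: "0 < n" using card_UNIV_field_ge_two[where 'a='a] by (simp add: n_def)
  obtain g :: 'a where g: "mult_generator g" using exists_mult_generator by blast
  then obtain k where t: "t = g ^ k" using assms by (auto simp: mult_generator_def)
  define w where "w = cis (2 * pi / n)"
  have w_power: "w ^ i = cis (2 * pi * real i / real n)" for i
    unfolding w_def DeMoivre by (simp add: field_simps)
  have "w ^ n = 1" using n_pos by (simp add: w_power)
  then obtain \<chi> where \<chi>: "\<chi> \<in> mult_chars" "\<chi> g = w"
    using exists_mult_char_at_mult_generator[OF g] by (auto simp: n_def)
  have "w ^ k = w ^ (n * (k div n) + k mod n)" by simp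
  also have "\<dots> = (w ^ n) ^ (k div n) * w ^ (k mod n)" by (simp only: power_add power_mult)
  finally have w_k: "w ^ k = w ^ (k mod n)" using \<open>w ^ n = 1\<close> by simp
  have "\<not> n dvd k"
    using assms t mult_generator_power_eq_one_iff[OF g] by (auto simp: n_def)
  then have "k mod n \<noteq> 0" by (simp add: dvd_eq_mod_eq_0)
  have "inj_on (\<lambda>i. w ^ i) {..<n}"
    using bij_betw_roots_unity[OF n_pos] by (simp add: bij_betw_def w_power)
  moreover have "k mod n \<in> {..<n}" "0 \<in> {..<n}" using n_pos by simp_all
  ultimately have "w ^ (k mod n) \<noteq> w ^ 0"
    using inj_onD[of "\<lambda>i. w ^ i" "{..<n}" "k mod n" 0] \<open>k mod n \<noteq> 0\<close> by blast
  then have "\<chi> t \<noteq> 1"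
    using \<chi> t w_k by (simp add: mult_char_power)
  with \<chi> show ?thesis by blast
qed

section \<open>Orthogonality of characters\<close>

lemma sum_UNIV_add_shift: "(\<Sum>x\<in>UNIV. f (a + x)) = (\<Sum>x\<in>UNIV. f (x :: 'a::{ab_group_add,finite}))"
  by (rule sum.reindex_bij_witness[of _ "\<lambda>x. x - a" "\<lambda>x. a + x"]) auto

lemma sum_UNIV_reflect: "(\<Sum>x\<in>UNIV. f (c - x)) = (\<Sum>x\<in>UNIV. f (x :: 'a::{ab_group_add,finite}))"
  by (rule sum.reindex_bij_witness[of _ "\<lambda>x. c - x" "\<lambda>x. c - x"]) auto

lemma sum_UNIV_mult_shift:
  "a \<noteq> 0 \<Longrightarrow> (\<Sum>x\<in>UNIV. f (a * x)) = (\<Sum>x\<in>UNIV. f (x :: 'a::{field,finite}))"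
  by (rule sum.reindex_bij_witness[of _ "\<lambda>x. x / a" "\<lambda>x. a * x"]) auto

lemma finite_mult_chars: "finite (mult_chars :: ('a::{field,finite} \<Rightarrow> complex) set)"
proof -
  define n where "n = card (UNIV :: 'a set) - 1"
  have n_pos: "0 < n" using card_UNIV_field_ge_two[where 'a='a] by (simp add: n_def)
  define R where "R = insert 0 {z :: complex. z ^ n = 1}"
  have "mult_chars \<subseteq> (UNIV :: 'a set) \<rightarrow>\<^sub>E R"
  proof
    fix \<chi> :: "'a \<Rightarrow> complex"
    assume \<chi>: "\<chi> \<in> mult_chars"
    have "\<chi> x \<in> R" for x
    proof (cases "x = 0")
      case False
      then have "\<chi> x ^ n = 1"
        using \<chi> power_card_minus_one_eq_one[OF False]
        by (simp add: n_def flip: mult_char_power) (simp add: mult_char_one)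
      then show ?thesis by (simp add: R_def)
    qed (simp add: R_def mult_char_zero[OF \<chi>])
    then show "\<chi> \<in> UNIV \<rightarrow>\<^sub>E R" by (simp add: PiE_iff)
  qed
  moreover have "finite R" using finite_nth_roots[OF n_pos] by (simp add: R_def)
  ultimately show ?thesis by (meson finite_PiE finite finite_subset)
qed

lemma sum_mult_char:
  fixes \<chi> :: "'a::{field,finite} \<Rightarrow> complex"
  assumes \<chi>: "\<chi> \<in> mult_chars"
  shows "(\<Sum>x\<in>UNIV. \<chi> x) = (if \<chi> = eps_char then of_nat (card (UNIV :: 'a set)) - 1 else 0)"
proof (cases "\<chi> = eps_char")
  case True
  have "(\<Sum>x\<in>UNIV. eps_char (x :: 'a)) = eps_char (0 :: 'a) + (\<Sum>x\<in>UNIV - {0 :: 'a}. eps_char x)"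
    using sum.remove[of "UNIV :: 'a set" 0 eps_char] by simp
  also have "\<dots> = of_nat (card (UNIV :: 'a set)) - 1"
    using card_UNIV_field_ge_two[where 'a='a] by (simp add: eps_char_def card_Diff_singleton of_nat_diff)
  finally show ?thesis using True by simp
next
  case False
  then obtain a where "a \<noteq> 0" "\<chi> a \<noteq> 1"
    using mult_char_neq_eps_charE[OF \<chi>] by blast
  have "\<chi> a * (\<Sum>x\<in>UNIV. \<chi> x) = (\<Sum>x\<in>UNIV. \<chi> (a * x))"
    by (simp add: mult_char_mult[OF \<chi>] sum_distrib_left)
  also have "\<dots> = (\<Sum>x\<in>UNIV. \<chi> x)" by (rule sum_UNIV_mult_shift[OF \<open>a \<noteq> 0\<close>])
  finally show ?thesis using \<open>\<chi> a \<noteq> 1\<close> False by (simp add: mult_cancel_right1)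
qed

lemma sum_mult_chars_apply_eq_zero:
  fixes t :: "'a::{field,finite}"
  assumes "t \<noteq> 0" "t \<noteq> 1"
  shows "(\<Sum>\<nu>\<in>mult_chars. \<nu> t) = 0"
proof -
  obtain \<chi> where \<chi>: "\<chi> \<in> mult_chars" "\<chi> t \<noteq> 1"
    using exists_mult_char_neq_one[OF assms] by blast
  have "\<chi> t * (\<Sum>\<nu>\<in>mult_chars. \<nu> t) = (\<Sum>\<nu>\<in>mult_chars. chmul \<chi> \<nu> t)"
    by (simp add: chmul_def sum_distrib_left)
  also have "\<dots> = (\<Sum>\<nu>\<in>mult_chars. \<nu> t)"
    by (rule sum.reindex_bij_witness[of _ "chmul (chinv \<chi>)" "chmul \<chi>"])
      (simp_all add: \<chi> chmul_in_mult_chars chinv_in_mult_chars chinv_chmul_cancel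
        chmul_chinv_cancel)
  finally show ?thesis using \<chi>(2) by (simp add: mult_cancel_right1)
qed

lemma card_mult_chars: "card (mult_chars :: ('a::{field,finite} \<Rightarrow> complex) set) = card (UNIV :: 'a set) - 1"
proof -
  have "(of_nat (card (UNIV :: 'a set)) - 1 :: complex)
      = (\<Sum>\<nu>\<in>mult_chars. if \<nu> = (eps_char :: 'a \<Rightarrow> complex)
          then of_nat (card (UNIV :: 'a set)) - 1 else 0)"
    by (simp add: finite_mult_chars eps_char_in_mult_chars)
  also have "\<dots> = (\<Sum>\<nu>\<in>mult_chars. \<Sum>x\<in>UNIV. \<nu> (x :: 'a))"
    by (rule sum.cong) (simp_all add: sum_mult_char)
  also have "\<dots> = (\<Sum>x\<in>UNIV. \<Sum>\<nu>\<in>mult_chars. \<nu> (x :: 'a))" by (rule sum.swap)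
  also have "\<dots> = (\<Sum>x\<in>UNIV. if x = (1 :: 'a) then of_nat (card (mult_chars :: ('a \<Rightarrow> complex) set)) else 0)"
  proof (rule sum.cong)
    fix x :: 'a
    show "(\<Sum>\<nu>\<in>mult_chars. \<nu> x) = (if x = 1 then of_nat (card (mult_chars :: ('a \<Rightarrow> complex) set)) else 0)"
      by (cases "x = 0") (simp_all add: mult_char_zero mult_char_one sum_mult_chars_apply_eq_zero)
  qed simp
  also have "\<dots> = of_nat (card (mult_chars :: ('a \<Rightarrow> complex) set))" by simp
  finally have "of_nat (card (mult_chars :: ('a \<Rightarrow> complex) set))
      = (of_nat (card (UNIV :: 'a set) - 1) :: complex)"
    using card_UNIV_field_ge_two[where 'a='a] by (simp add: of_nat_diff)
  then show ?thesis by (simp only: of_nat_eq_iff)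
qed

lemma sum_mult_chars_apply:
  fixes t :: "'a::{field,finite}"
  shows "(\<Sum>\<nu>\<in>mult_chars. \<nu> t) = (if t = 1 then of_nat (card (UNIV :: 'a set)) - 1 else 0)"
  using card_UNIV_field_ge_two[where 'a='a] sum_mult_chars_apply_eq_zero[of t]
  by (cases "t = 0") (auto simp: mult_char_zero mult_char_one card_mult_chars of_nat_diff)

lemma sum_mult_chars_expansion:
  fixes F :: "'a::{field,finite} \<Rightarrow> complex"
  assumes "z \<noteq> 0"
  shows "(\<Sum>\<nu>\<in>mult_chars. (\<Sum>x\<in>UNIV. F x * \<nu> x) * \<nu> z)
    = (of_nat (card (UNIV :: 'a set)) - 1) * F (inverse z)"
proof -
  have "(\<Sum>\<nu>\<in>mult_chars. (\<Sum>x\<in>UNIV. F x * \<nu> x) * \<nu> z)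
      = (\<Sum>\<nu>\<in>mult_chars. \<Sum>x\<in>UNIV. F x * \<nu> (x * z))"
    by (rule sum.cong) (simp_all add: sum_distrib_right mult_char_mult mult.assoc)
  also have "\<dots> = (\<Sum>x\<in>UNIV. F x * (\<Sum>\<nu>\<in>mult_chars. \<nu> (x * z)))"
    by (subst sum.swap) (simp add: sum_distrib_left)
  also have "\<dots> = (\<Sum>x\<in>UNIV. if x = inverse z then F x * (of_nat (card (UNIV :: 'a set)) - 1) else 0)"
    using assms by (intro sum.cong refl) (auto simp: sum_mult_chars_apply field_simps)
  finally show ?thesis by (simp add: mult.commute)
qed

lemma sum_mult_chars_expansion_product:
  fixes F G :: "'a::{field,finite} \<Rightarrow> complex"
  assumes "z \<noteq> 0" and "F 0 = 0"
  shows "(\<Sum>\<nu>\<in>mult_chars. (\<Sum>x\<in>UNIV. F x * \<nu> x) * (\<Sum>y\<in>UNIV. G y * \<nu> y) * \<nu> z)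
    = (of_nat (card (UNIV :: 'a set)) - 1) * (\<Sum>x\<in>UNIV. F x * G (inverse (x * z)))"
proof -
  have "(\<Sum>\<nu>\<in>mult_chars. (\<Sum>x\<in>UNIV. F x * \<nu> x) * (\<Sum>y\<in>UNIV. G y * \<nu> y) * \<nu> z)
      = (\<Sum>\<nu>\<in>mult_chars. \<Sum>x\<in>UNIV. F x * ((\<Sum>y\<in>UNIV. G y * \<nu> y) * \<nu> (x * z)))"
  proof (rule sum.cong[OF refl])
    fix \<nu> :: "'a \<Rightarrow> complex"
    assume "\<nu> \<in> mult_chars"
    define S where "S = (\<Sum>y\<in>UNIV. G y * \<nu> y)"
    have "(\<Sum>x\<in>UNIV. F x * \<nu> x) * S * \<nu> z = (\<Sum>x\<in>UNIV. F x * \<nu> x * (S * \<nu> z))"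
      by (simp add: sum_distrib_right mult.assoc)
    also have "\<dots> = (\<Sum>x\<in>UNIV. F x * (S * \<nu> (x * z)))"
      using \<open>\<nu> \<in> mult_chars\<close> by (simp add: mult_char_mult mult_ac)
    finally show "(\<Sum>x\<in>UNIV. F x * \<nu> x) * S * \<nu> z = (\<Sum>x\<in>UNIV. F x * (S * \<nu> (x * z)))" .
  qed
  also have "\<dots> = (\<Sum>x\<in>UNIV. F x * (\<Sum>\<nu>\<in>mult_chars. (\<Sum>y\<in>UNIV. G y * \<nu> y) * \<nu> (x * z)))"
    by (subst sum.swap) (simp add: sum_distrib_left)
  also have "\<dots> = (\<Sum>x\<in>UNIV. F x * ((of_nat (card (UNIV :: 'a set)) - 1) * G (inverse (x * z))))"
  proof (rule sum.cong[OF refl])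
    fix x :: 'a
    show "F x * (\<Sum>\<nu>\<in>mult_chars. (\<Sum>y\<in>UNIV. G y * \<nu> y) * \<nu> (x * z))
        = F x * ((of_nat (card (UNIV :: 'a set)) - 1) * G (inverse (x * z)))"
      using assms sum_mult_chars_expansion[of "x * z" G] by (cases "x = 0") simp_all
  qed
  finally show ?thesis by (simp add: sum_distrib_left mult_ac)
qed

lemma sum_mult_chars_expansion_diff:
  fixes F G :: "'a::{field,finite} \<Rightarrow> complex"
  assumes "z \<noteq> 0" and "F 0 = 0"
  shows "(\<Sum>\<nu>\<in>mult_chars. (d - (\<Sum>u\<in>UNIV. G u * \<nu> u)) * (\<Sum>x\<in>UNIV. F x * \<nu> x) * \<nu> z)
    = (of_nat (card (UNIV :: 'a set)) - 1) * (d * F (inverse z) - (\<Sum>x\<in>UNIV. F x * G (inverse (x * z))))"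
proof -
  define SF where "SF \<nu> = (\<Sum>x\<in>UNIV. F x * \<nu> x)" for \<nu> :: "'a \<Rightarrow> complex"
  define SG where "SG \<nu> = (\<Sum>u\<in>UNIV. G u * \<nu> u)" for \<nu> :: "'a \<Rightarrow> complex"
  have "(\<Sum>\<nu>\<in>mult_chars. (d - SG \<nu>) * SF \<nu> * \<nu> z)
      = d * (\<Sum>\<nu>\<in>mult_chars. SF \<nu> * \<nu> z) - (\<Sum>\<nu>\<in>mult_chars. SF \<nu> * SG \<nu> * \<nu> z)"
    by (simp add: sum_subtractf sum_distrib_left algebra_simps)
  then show ?thesis
    unfolding SF_def SG_def sum_mult_chars_expansion[OF assms(1)]
      sum_mult_chars_expansion_product[of z F G, OF assms]
    by (simp add: algebra_simps)
qed

section \<open>Jacobi sums\<close>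

definition jacobi_sum :: "('a::{field,finite} \<Rightarrow> complex) \<Rightarrow> ('a \<Rightarrow> complex) \<Rightarrow> complex" where
  "jacobi_sum \<chi> \<eta> = (\<Sum>x\<in>UNIV. \<chi> x * \<eta> (1 - x))"

lemma jacobi_sum_commute: "jacobi_sum \<chi> \<eta> = jacobi_sum \<eta> \<chi>"
  unfolding jacobi_sum_def
  by (subst sum_UNIV_reflect[of _ 1, symmetric]) (simp add: mult.commute)

lemma sum_reindex_div_minus_one:
  fixes f g :: "'a::{field,finite} \<Rightarrow> 'b::comm_semiring_0"
  shows "(\<Sum>y\<in>UNIV - {1}. f y * g (y / (y - 1))) = (\<Sum>u\<in>UNIV - {1}. f (u / (u - 1)) * g u)"
proof -
  define \<phi> :: "'a \<Rightarrow> 'a" where "\<phi> y = y / (y - 1)" for y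
  have \<phi>: "\<phi> (\<phi> y) = y" "\<phi> y \<noteq> 1" if "y \<noteq> 1" for y
  proof -
    from that have "y - 1 \<noteq> 0" by simp
    then show "\<phi> (\<phi> y) = y" "\<phi> y \<noteq> 1" by (simp_all add: \<phi>_def field_simps)
  qed
  have "(\<Sum>y\<in>UNIV - {1}. f y * g (\<phi> y)) = (\<Sum>u\<in>UNIV - {1}. f (\<phi> u) * g (\<phi> (\<phi> u)))"
    by (rule sum.reindex_bij_witness[of _ \<phi> \<phi>]) (auto simp: \<phi>)
  also have "\<dots> = (\<Sum>u\<in>UNIV - {1}. f (\<phi> u) * g u)" by (rule sum.cong) (simp_all add: \<phi>)
  finally show ?thesis by (simp only: \<phi>_def)
qed

lemma jacobi_sum_chmul_chinv:
  fixes a \<nu> :: "'a::{field,finite} \<Rightarrow> complex"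
  assumes a: "a \<in> mult_chars" and \<nu>: "\<nu> \<in> mult_chars"
  shows "\<nu> (-1) * jacobi_sum (chmul a \<nu>) (chinv \<nu>) = (\<Sum>u\<in>UNIV. a (u / (u - 1)) * \<nu> u)"
proof -
  have inv: "inverse (\<nu> (-1)) = \<nu> (-1)"
    using mult_char_minus_one_squared[OF \<nu>] by (rule inverse_unique)
  have pointwise: "\<nu> (-1) * (a y * \<nu> y * inverse (\<nu> (1 - y))) = a y * \<nu> (y / (y - 1))" for y
  proof -
    have "\<nu> (y - 1) = \<nu> (-1) * \<nu> (1 - y)" using mult_char_mult[OF \<nu>, of "-1" "1 - y"] by simp
    then show ?thesis
      by (simp add: divide_inverse mult_char_mult[OF \<nu>] mult_char_inverse[OF \<nu>]
          inverse_mult_distrib inv mult_ac)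
  qed
  have "\<nu> (-1) * jacobi_sum (chmul a \<nu>) (chinv \<nu>)
      = (\<Sum>y\<in>UNIV. \<nu> (-1) * (a y * \<nu> y * inverse (\<nu> (1 - y))))"
    by (simp add: jacobi_sum_def chmul_def chinv_def sum_distrib_left)
  also have "\<dots> = (\<Sum>y\<in>UNIV. a y * \<nu> (y / (y - 1)))"
    by (rule sum.cong[OF refl]) (rule pointwise)
  also have "\<dots> = (\<Sum>y\<in>UNIV - {1}. a y * \<nu> (y / (y - 1)))"
    using mult_char_zero[OF \<nu>] by (intro sum.mono_neutral_right) auto
  also have "\<dots> = (\<Sum>u\<in>UNIV - {1}. a (u / (u - 1)) * \<nu> u)"
    by (rule sum_reindex_div_minus_one)
  also have "\<dots> = (\<Sum>u\<in>UNIV. a (u / (u - 1)) * \<nu> u)"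
    using mult_char_zero[OF a] by (intro sum.mono_neutral_left) auto
  finally show ?thesis .
qed

lemma jacobi_sum_chinv:
  fixes \<eta> :: "'a::{field,finite} \<Rightarrow> complex"
  assumes \<eta>: "\<eta> \<in> mult_chars" "\<eta> \<noteq> eps_char"
  shows "jacobi_sum \<eta> (chinv \<eta>) = - \<eta> (-1)"
proof -
  have "eps_char (u / (u - 1)) * \<eta> u = \<eta> u - (if u = 1 then \<eta> 1 else 0)" for u
    using mult_char_zero[OF \<eta>(1)] by (cases "u = 0 \<or> u = 1") (auto simp: eps_char_def)
  then have "(\<Sum>u\<in>UNIV. eps_char (u / (u - 1)) * \<eta> u) = (\<Sum>u\<in>UNIV. \<eta> u) - \<eta> 1"
    by (simp add: sum_subtractf)
  then have "\<eta> (-1) * jacobi_sum \<eta> (chinv \<eta>) = - 1"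
    using jacobi_sum_chmul_chinv[OF eps_char_in_mult_chars \<eta>(1)] sum_mult_char[OF \<eta>(1)] \<eta>(2)
    by (simp add: chmul_eps_char_left[OF \<eta>(1)] mult_char_one[OF \<eta>(1)])
  moreover have "jacobi_sum \<eta> (chinv \<eta>) = \<eta> (-1) * (\<eta> (-1) * jacobi_sum \<eta> (chinv \<eta>))"
    using mult_char_minus_one_squared[OF \<eta>(1)] by (simp add: mult.assoc[symmetric])
  ultimately show ?thesis by simp
qed

lemma sum_mult_char_convolution_nonzero:
  fixes \<chi> \<eta> :: "'a::{field,finite} \<Rightarrow> complex"
  assumes \<chi>: "\<chi> \<in> mult_chars" and \<eta>: "\<eta> \<in> mult_chars" and "s \<noteq> 0"
  shows "(\<Sum>x\<in>UNIV. \<chi> x * \<eta> (s - x)) = chmul \<chi> \<eta> s * jacobi_sum \<chi> \<eta>"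
proof -
  have "(\<Sum>x\<in>UNIV. \<chi> x * \<eta> (s - x)) = (\<Sum>u\<in>UNIV. \<chi> (s * u) * \<eta> (s - s * u))"
    by (rule sum_UNIV_mult_shift[OF \<open>s \<noteq> 0\<close>, symmetric])
  also have "\<dots> = (\<Sum>u\<in>UNIV. chmul \<chi> \<eta> s * (\<chi> u * \<eta> (1 - u)))"
  proof (rule sum.cong[OF refl])
    fix u
    have "s - s * u = s * (1 - u)" by (simp add: algebra_simps)
    then show "\<chi> (s * u) * \<eta> (s - s * u) = chmul \<chi> \<eta> s * (\<chi> u * \<eta> (1 - u))"
      by (simp add: mult_char_mult[OF \<chi>] mult_char_mult[OF \<eta>] chmul_def)
  qed
  finally show ?thesis by (simp add: jacobi_sum_def sum_distrib_left)
qed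

lemma sum_mult_char_convolution_zero:
  fixes \<chi> \<eta> :: "'a::{field,finite} \<Rightarrow> complex"
  assumes \<chi>: "\<chi> \<in> mult_chars" and \<eta>: "\<eta> \<in> mult_chars"
  shows "(\<Sum>x\<in>UNIV. \<chi> x * \<eta> (0 - x))
    = (if chmul \<chi> \<eta> = eps_char then \<eta> (-1) * (of_nat (card (UNIV :: 'a set)) - 1) else 0)"
proof -
  have "(\<Sum>x\<in>UNIV. \<chi> x * \<eta> (0 - x)) = (\<Sum>x\<in>UNIV. \<eta> (-1) * chmul \<chi> \<eta> x)"
  proof (rule sum.cong[OF refl])
    fix x
    have "\<eta> (0 - x) = \<eta> (-1) * \<eta> x"
      using mult_char_mult[OF \<eta>, of "-1" x] by simp
    then show "\<chi> x * \<eta> (0 - x) = \<eta> (-1) * chmul \<chi> \<eta> x"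
      by (simp add: chmul_def)
  qed
  also have "\<dots> = \<eta> (-1) * (\<Sum>x\<in>UNIV. chmul \<chi> \<eta> x)"
    by (simp add: sum_distrib_left)
  finally show ?thesis
    by (simp add: sum_mult_char chmul_in_mult_chars[OF \<chi> \<eta>])
qed

section \<open>Hypergeometric functions over a finite field\<close>

definition hyp2F1 :: "('a::{field,finite} \<Rightarrow> complex) \<Rightarrow> ('a \<Rightarrow> complex) \<Rightarrow> ('a \<Rightarrow> complex)
    \<Rightarrow> ('a \<Rightarrow> complex) \<Rightarrow> 'a \<Rightarrow> complex" where
  "hyp2F1 \<psi> a b c z =
     1 / (1 - of_nat (card (UNIV::'a set))) *
     (\<Sum>\<nu>\<in>mult_chars. poch \<psi> a \<nu> * poch \<psi> b \<nu> / (poch0 \<psi> eps_char \<nu> * poch0 \<psi> c \<nu>) * \<nu> z)"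

lemma hyp2F1_zero: "hyp2F1 \<psi> a b c 0 = 0"
  by (simp add: hyp2F1_def mult_char_zero)

lemma appellF2_swap: "appellF2 \<psi> \<alpha> \<beta>1 \<beta>2 \<gamma>1 \<gamma>2 x y = appellF2 \<psi> \<alpha> \<beta>2 \<beta>1 \<gamma>2 \<gamma>1 y x"
  unfolding appellF2_def by (subst sum.swap) (simp add: chmul_commute mult_ac)

lemma chinv_apply_one_minus:
  assumes "a \<in> mult_chars" "t \<noteq> 0"
  shows "chinv a (1 - t) = a (inverse t / (inverse t - 1))"
proof -
  have "inverse t / (inverse t - 1) = inverse (1 - t)"
    using assms(2) by (cases "t = 1") (simp_all add: field_simps)
  then show ?thesis by (simp add: chinv_apply[OF assms(1)])
qed

lemma sum_pfaff_reindex: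
  fixes b B :: "'a::{field,finite} \<Rightarrow> complex"
  assumes a: "a \<in> mult_chars" and z1: "z \<noteq> 1"
  shows "(\<Sum>x\<in>UNIV. B x * b (1 - x) * chinv a (1 - z / (z - 1) * x))
    = a (1 - z) * (\<Sum>x\<in>UNIV. b x * B (1 - x) * chinv a (1 - z * x))"
proof -
  define w where "w = z / (z - 1)"
  have "1 - w * (1 - x) = (1 - z * x) / (1 - z)" for x
    using z1 by (simp add: w_def field_simps)
  then have "chinv a (1 - w * (1 - x)) = a (1 - z) * chinv a (1 - z * x)" for x
    by (simp add: chinv_apply[OF a] mult_char_mult[OF a] mult_char_inverse[OF a] divide_inverse)
  then show ?thesis
    unfolding w_def[symmetric]
    by (subst sum_UNIV_reflect[of _ 1, symmetric]) (simp add: sum_distrib_left mult_ac)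
qed

section \<open>Gauss sums and Pochhammer symbols\<close>

context
  fixes \<psi> :: "'a::{field,finite} \<Rightarrow> complex"
  assumes \<psi>_add: "add_char \<psi>"
begin

lemma add_char_add: "\<psi> (x + y) = \<psi> x * \<psi> y"
  using \<psi>_add by (simp add: add_char_def)

lemma add_char_zero: "\<psi> 0 = 1"
proof -
  have "\<psi> 0 * \<psi> 0 = \<psi> 0 * 1" using add_char_add[of 0 0] by simp
  moreover have "\<psi> 0 \<noteq> 0" using \<psi>_add by (simp add: add_char_def)
  ultimately show ?thesis by auto
qed

lemma gauss_eq_sum_UNIV: "\<eta> \<in> mult_chars \<Longrightarrow> gauss \<psi> \<eta> = - (\<Sum>x\<in>UNIV. \<psi> x * \<eta> x)"
  using sum.remove[of UNIV 0 "\<lambda>x. \<psi> x * \<eta> x"] by (simp add: gauss_def mult_char_zero)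

lemma gauss_mult_gauss:
  assumes \<chi>: "\<chi> \<in> mult_chars" and \<eta>: "\<eta> \<in> mult_chars"
  shows "gauss \<psi> \<chi> * gauss \<psi> \<eta> = - jacobi_sum \<chi> \<eta> * gauss \<psi> (chmul \<chi> \<eta>)
    + (if chmul \<chi> \<eta> = eps_char then \<eta> (-1) * (of_nat (card (UNIV :: 'a set)) - 1) else 0)"
    (is "_ = - ?J * _ + ?I")
proof -
  have \<chi>\<eta>: "chmul \<chi> \<eta> \<in> mult_chars" using \<chi> \<eta> by (rule chmul_in_mult_chars)
  have convolution: "(\<Sum>x\<in>UNIV. \<chi> x * \<eta> (s - x)) = chmul \<chi> \<eta> s * ?J + (if s = 0 then ?I else 0)" for s
    using sum_mult_char_convolution_zero[OF \<chi> \<eta>] sum_mult_char_convolution_nonzero[OF \<chi> \<eta>]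
    by (cases "s = 0") (simp_all add: mult_char_zero[OF \<chi>\<eta>])
  have "gauss \<psi> \<chi> * gauss \<psi> \<eta> = (\<Sum>x\<in>UNIV. \<Sum>y\<in>UNIV. \<psi> (x + y) * (\<chi> x * \<eta> y))"
    by (simp add: gauss_eq_sum_UNIV \<chi> \<eta> sum_product add_char_add mult_ac)
  also have "\<dots> = (\<Sum>x\<in>UNIV. \<Sum>s\<in>UNIV. \<psi> s * (\<chi> x * \<eta> (s - x)))"
  proof (rule sum.cong[OF refl])
    fix x
    show "(\<Sum>y\<in>UNIV. \<psi> (x + y) * (\<chi> x * \<eta> y)) = (\<Sum>s\<in>UNIV. \<psi> s * (\<chi> x * \<eta> (s - x)))"
      using sum_UNIV_add_shift[of "\<lambda>s. \<psi> s * (\<chi> x * \<eta> (s - x))" x] by simp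
  qed
  also have "\<dots> = (\<Sum>s\<in>UNIV. \<psi> s * (\<Sum>x\<in>UNIV. \<chi> x * \<eta> (s - x)))"
    by (subst sum.swap) (simp add: sum_distrib_left)
  also have "\<dots> = (\<Sum>s\<in>UNIV. ?J * (\<psi> s * chmul \<chi> \<eta> s) + (if s = 0 then ?I else 0))"
  proof (rule sum.cong[OF refl])
    fix s
    show "\<psi> s * (\<Sum>x\<in>UNIV. \<chi> x * \<eta> (s - x))
        = ?J * (\<psi> s * chmul \<chi> \<eta> s) + (if s = 0 then ?I else 0)"
      by (cases "s = 0") (simp_all only: convolution add_char_zero if_True if_False, simp_all)
  qed
  also have "\<dots> = ?J * (\<Sum>s\<in>UNIV. \<psi> s * chmul \<chi> \<eta> s) + ?I"
    by (simp add: sum.distrib sum_distrib_left)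
  finally show ?thesis by (simp add: gauss_eq_sum_UNIV[OF \<chi>\<eta>])
qed

context
  assumes \<psi>_nontrivial: "\<exists>x. \<psi> x \<noteq> 1"
begin

lemma sum_add_char: "(\<Sum>x\<in>UNIV. \<psi> x) = 0"
proof -
  obtain a where "\<psi> a \<noteq> 1" using \<psi>_nontrivial by blast
  have "\<psi> a * (\<Sum>x\<in>UNIV. \<psi> x) = (\<Sum>x\<in>UNIV. \<psi> (a + x))"
    by (simp add: add_char_add sum_distrib_left)
  also have "\<dots> = (\<Sum>x\<in>UNIV. \<psi> x)" by (rule sum_UNIV_add_shift)
  finally show ?thesis using \<open>\<psi> a \<noteq> 1\<close> by (simp add: mult_cancel_right1)
qed

lemma gauss_eps_char: "gauss \<psi> eps_char = 1"
proof -
  have "gauss \<psi> eps_char = - (\<Sum>x\<in>UNIV - {0}. \<psi> x)"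
    by (simp add: gauss_def eps_char_def)
  also have "(\<Sum>x\<in>UNIV - {0}. \<psi> x) = (\<Sum>x\<in>UNIV. \<psi> x) - \<psi> 0"
    using sum.remove[of UNIV 0 \<psi>] by simp
  finally show ?thesis by (simp add: sum_add_char add_char_zero)
qed

lemma gauss0_eps_char: "gauss0 \<psi> eps_char = of_nat (card (UNIV :: 'a set))"
  by (simp add: gauss0_def delta_char_def gauss_eps_char)

lemma gauss0_eq_gauss: "\<eta> \<noteq> eps_char \<Longrightarrow> gauss0 \<psi> \<eta> = gauss \<psi> \<eta>"
  by (simp add: gauss0_def delta_char_def)

lemma gauss0_mult_gauss_chinv:
  assumes \<eta>: "\<eta> \<in> mult_chars"
  shows "gauss0 \<psi> \<eta> * gauss \<psi> (chinv \<eta>) = \<eta> (-1) * of_nat (card (UNIV :: 'a set))"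
proof (cases "\<eta> = eps_char")
  case True
  then show ?thesis by (simp add: gauss0_eps_char gauss_eps_char eps_char_def)
next
  case False
  have "gauss \<psi> \<eta> * gauss \<psi> (chinv \<eta>) = - jacobi_sum \<eta> (chinv \<eta>) * gauss \<psi> eps_char
      + chinv \<eta> (-1) * (of_nat (card (UNIV :: 'a set)) - 1)"
    using gauss_mult_gauss[OF \<eta> chinv_in_mult_chars[OF \<eta>]] by (simp add: chmul_chinv[OF \<eta>])
  then show ?thesis
    using False by (simp add: gauss0_eq_gauss jacobi_sum_chinv[OF \<eta> False] gauss_eps_char
        chinv_minus_one[OF \<eta>] algebra_simps)
qed

lemma gauss0_nonzero: "\<eta> \<in> mult_chars \<Longrightarrow> gauss0 \<psi> \<eta> \<noteq> 0"
  using gauss0_mult_gauss_chinv[of \<eta>] mult_char_nonzero[of \<eta> "-1"] by auto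

lemma gauss_nonzero: "\<eta> \<in> mult_chars \<Longrightarrow> gauss \<psi> \<eta> \<noteq> 0"
  using gauss0_mult_gauss_chinv[OF chinv_in_mult_chars, of \<eta>]
    mult_char_nonzero[OF chinv_in_mult_chars, of \<eta> "-1"] by auto

lemma gauss_mult_gauss_eq_jacobi:
  assumes \<chi>: "\<chi> \<in> mult_chars" and \<eta>: "\<eta> \<in> mult_chars" "\<eta> \<noteq> eps_char"
  shows "gauss \<psi> \<chi> * gauss \<psi> \<eta> = - jacobi_sum \<chi> \<eta> * gauss0 \<psi> (chmul \<chi> \<eta>)"
proof (cases "chmul \<chi> \<eta> = eps_char")
  case False
  then show ?thesis using gauss_mult_gauss[OF \<chi> \<eta>(1)] by (simp add: gauss0_eq_gauss)
next
  case True
  have "\<chi> = chmul (chinv \<eta>) (chmul \<eta> \<chi>)" by (simp add: chinv_chmul_cancel \<chi> \<eta>)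
  also have "\<dots> = chinv \<eta>"
    using True by (simp add: chmul_commute[of \<eta>] chmul_eps_char_right chinv_in_mult_chars \<eta>)
  finally have "jacobi_sum \<chi> \<eta> = - \<eta> (-1)"
    using jacobi_sum_chinv[OF \<eta>] jacobi_sum_commute by metis
  then show ?thesis
    using True gauss_mult_gauss[OF \<chi> \<eta>(1)]
    by (simp add: gauss0_eps_char gauss_eps_char algebra_simps)
qed

lemma poch_chmul:
  assumes "\<alpha> \<in> mult_chars" "\<nu> \<in> mult_chars"
  shows "poch \<psi> \<alpha> (chmul \<nu> \<mu>) = poch \<psi> \<alpha> \<nu> * poch \<psi> (chmul \<alpha> \<nu>) \<mu>"
  using gauss_nonzero[OF chmul_in_mult_chars[OF assms]] by (simp add: poch_def chmul_assoc)

lemma poch0_chmul: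
  assumes "\<alpha> \<in> mult_chars" "\<nu> \<in> mult_chars"
  shows "poch0 \<psi> \<alpha> (chmul \<nu> \<mu>) = poch0 \<psi> \<alpha> \<nu> * poch0 \<psi> (chmul \<alpha> \<nu>) \<mu>"
  using gauss0_nonzero[OF chmul_in_mult_chars[OF assms]] by (simp add: poch0_def chmul_assoc)

lemma poch_chinv:
  assumes \<chi>: "\<chi> \<in> mult_chars" and \<nu>: "\<nu> \<in> mult_chars"
  shows "poch \<psi> (chinv \<chi>) (chinv \<nu>) = \<nu> (-1) / poch0 \<psi> \<chi> \<nu>"
proof -
  have \<chi>\<nu>: "chmul \<chi> \<nu> \<in> mult_chars" using \<chi> \<nu> by (rule chmul_in_mult_chars)
  have "gauss0 \<psi> (chmul \<chi> \<nu>) * gauss \<psi> (chinv (chmul \<chi> \<nu>))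
      = \<nu> (-1) * (gauss0 \<psi> \<chi> * gauss \<psi> (chinv \<chi>))"
    using gauss0_mult_gauss_chinv[OF \<chi>] gauss0_mult_gauss_chinv[OF \<chi>\<nu>]
    by (simp add: chmul_def mult_ac)
  then show ?thesis
    using gauss_nonzero[OF chinv_in_mult_chars[OF \<chi>]] gauss0_nonzero[OF \<chi>\<nu>]
    by (simp add: poch_def poch0_def chinv_chmul field_simps)
qed

lemma poch0_chinv:
  assumes \<chi>: "\<chi> \<in> mult_chars" and \<nu>: "\<nu> \<in> mult_chars"
  shows "poch0 \<psi> (chinv \<chi>) (chinv \<nu>) = \<nu> (-1) / poch \<psi> \<chi> \<nu>"
proof -
  have \<chi>\<nu>: "chmul \<chi> \<nu> \<in> mult_chars" using \<chi> \<nu> by (rule chmul_in_mult_chars)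
  have "gauss0 \<psi> (chinv (chmul \<chi> \<nu>)) * gauss \<psi> (chmul \<chi> \<nu>)
      = \<nu> (-1) * (gauss0 \<psi> (chinv \<chi>) * gauss \<psi> \<chi>)"
    using gauss0_mult_gauss_chinv[OF chinv_in_mult_chars[OF \<chi>]]
      gauss0_mult_gauss_chinv[OF chinv_in_mult_chars[OF \<chi>\<nu>]]
    by (simp add: chinv_minus_one \<chi> \<chi>\<nu> chmul_def mult_ac)
  then show ?thesis
    using gauss0_nonzero[OF chinv_in_mult_chars[OF \<chi>]] gauss_nonzero[OF \<chi>\<nu>]
    by (simp add: poch_def poch0_def chinv_chmul field_simps)
qed

lemma poch_div_poch0_eps_char:
  assumes a: "a \<in> mult_chars" and \<nu>: "\<nu> \<in> mult_chars"
  shows "poch \<psi> a \<nu> / poch0 \<psi> eps_char \<nu>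
    = (of_nat (card (UNIV :: 'a set)) - 1) * of_nat (delta_char a) - (\<Sum>u\<in>UNIV. a (u / (u - 1)) * \<nu> u)"
proof -
  have a\<nu>: "chmul a \<nu> \<in> mult_chars" using a \<nu> by (rule chmul_in_mult_chars)
  have \<nu>': "chinv \<nu> \<in> mult_chars" using \<nu> by (rule chinv_in_mult_chars)
  have sq: "\<nu> (-1) * \<nu> (-1) = 1" by (rule mult_char_minus_one_squared[OF \<nu>])
  have "\<nu> (-1) * (gauss0 \<psi> \<nu> * gauss \<psi> (chinv \<nu>)) = (\<nu> (-1) * \<nu> (-1)) * of_nat (card (UNIV :: 'a set))"
    by (simp add: gauss0_mult_gauss_chinv[OF \<nu>] mult.assoc)
  then have q: "of_nat (card (UNIV :: 'a set)) = \<nu> (-1) * (gauss0 \<psi> \<nu> * gauss \<psi> (chinv \<nu>))"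
    by (simp add: sq)
  have product: "gauss \<psi> (chmul a \<nu>) * gauss \<psi> (chinv \<nu>) = - jacobi_sum (chmul a \<nu>) (chinv \<nu>) * gauss \<psi> a
      + (if a = eps_char then \<nu> (-1) * (of_nat (card (UNIV :: 'a set)) - 1) else 0)"
    using gauss_mult_gauss[OF a\<nu> \<nu>']
    by (simp add: chmul_assoc chmul_chinv[OF \<nu>] chmul_eps_char_right[OF a] chinv_minus_one[OF \<nu>])
  have "poch \<psi> a \<nu> / poch0 \<psi> eps_char \<nu>
      = \<nu> (-1) * (gauss \<psi> (chmul a \<nu>) * gauss \<psi> (chinv \<nu>)) / gauss \<psi> a"
    using gauss0_nonzero[OF \<nu>]
    by (simp add: poch_def poch0_def chmul_eps_char_left[OF \<nu>] gauss0_eps_char) (simp add: q field_simps)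
  also have "\<dots> = (of_nat (card (UNIV :: 'a set)) - 1) * of_nat (delta_char a)
      - \<nu> (-1) * jacobi_sum (chmul a \<nu>) (chinv \<nu>)"
    unfolding product using gauss_nonzero[OF a] sq
    by (cases "a = eps_char") (simp_all add: delta_char_def gauss_eps_char field_simps)
  finally show ?thesis by (simp only: jacobi_sum_chmul_chinv[OF a \<nu>])
qed

lemma poch_div_poch0:
  assumes b: "b \<in> mult_chars" and c: "c \<in> mult_chars" and \<nu>: "\<nu> \<in> mult_chars"
    and bc: "chmul (chinv b) c \<noteq> eps_char"
  shows "poch \<psi> b \<nu> / poch0 \<psi> c \<nu> = - gauss0 \<psi> c / (gauss \<psi> b * gauss \<psi> (chmul (chinv b) c))
    * (\<Sum>x\<in>UNIV. b x * chmul (chinv b) c (1 - x) * \<nu> x)"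
proof -
  define B where "B = chmul (chinv b) c"
  have B: "B \<in> mult_chars" unfolding B_def using b c by (simp add: chmul_in_mult_chars chinv_in_mult_chars)
  have b\<nu>: "chmul b \<nu> \<in> mult_chars" and c\<nu>: "chmul c \<nu> \<in> mult_chars"
    using b c \<nu> by (simp_all add: chmul_in_mult_chars)
  have "chmul (chmul b \<nu>) B = chmul c \<nu>"
    by (rule mult_chars_eqI[OF chmul_in_mult_chars[OF b\<nu> B] c\<nu>])
      (simp add: B_def chmul_def chinv_def mult_char_nonzero[OF b])
  then have "gauss \<psi> (chmul b \<nu>) * gauss \<psi> B = - jacobi_sum (chmul b \<nu>) B * gauss0 \<psi> (chmul c \<nu>)"
    using gauss_mult_gauss_eq_jacobi[OF b\<nu> B bc[folded B_def]] by simp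
  then have "gauss \<psi> (chmul b \<nu>) = - jacobi_sum (chmul b \<nu>) B * gauss0 \<psi> (chmul c \<nu>) / gauss \<psi> B"
    using gauss_nonzero[OF B] by (simp add: field_simps)
  moreover have "jacobi_sum (chmul b \<nu>) B = (\<Sum>x\<in>UNIV. b x * B (1 - x) * \<nu> x)"
    by (simp add: jacobi_sum_def chmul_def mult_ac)
  ultimately show ?thesis
    unfolding B_def[symmetric]
    using gauss_nonzero[OF b] gauss0_nonzero[OF c] gauss0_nonzero[OF c\<nu>]
    by (simp add: poch_def poch0_def field_simps)
qed

lemma poch_div_poch0_chinv_chmul:
  assumes \<alpha>: "\<alpha> \<in> mult_chars" and \<beta>: "\<beta> \<in> mult_chars" and \<gamma>: "\<gamma> \<in> mult_chars"
    and \<nu>: "\<nu> \<in> mult_chars"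
  shows "poch \<psi> (chmul (chinv \<beta>) \<gamma>) (chinv (chmul \<alpha> \<nu>)) / poch0 \<psi> \<gamma> (chinv (chmul \<alpha> \<nu>))
    = poch \<psi> (chmul (chinv \<beta>) \<gamma>) (chinv \<alpha>) / poch0 \<psi> \<gamma> (chinv \<alpha>)
      * (poch \<psi> (chmul \<alpha> (chinv \<gamma>)) \<nu> / poch0 \<psi> (chmul (chmul \<alpha> \<beta>) (chinv \<gamma>)) \<nu>)"
proof -
  define A where "A = chmul \<alpha> (chinv \<gamma>)"
  define D where "D = chmul (chmul \<alpha> \<beta>) (chinv \<gamma>)"
  have A: "A \<in> mult_chars" and D: "D \<in> mult_chars" and B: "chmul (chinv \<beta>) \<gamma> \<in> mult_chars"
    and \<alpha>': "chinv \<alpha> \<in> mult_chars"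
    unfolding A_def D_def using \<alpha> \<beta> \<gamma> by (simp_all add: chmul_in_mult_chars chinv_in_mult_chars)
  have "chmul (chmul (chinv \<beta>) \<gamma>) (chinv \<alpha>) = chinv D" "chmul \<gamma> (chinv \<alpha>) = chinv A"
    by (simp_all add: A_def D_def chinv_chmul chmul_commute chmul_assoc) (simp add: chmul_def mult_ac fun_eq_iff)+
  then have numerator: "poch \<psi> (chmul (chinv \<beta>) \<gamma>) (chinv (chmul \<alpha> \<nu>))
      = poch \<psi> (chmul (chinv \<beta>) \<gamma>) (chinv \<alpha>) * (\<nu> (-1) / poch0 \<psi> D \<nu>)"
    and denominator: "poch0 \<psi> \<gamma> (chinv (chmul \<alpha> \<nu>)) = poch0 \<psi> \<gamma> (chinv \<alpha>) * (\<nu> (-1) / poch \<psi> A \<nu>)"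
    by (simp_all add: chinv_chmul poch_chmul[OF B \<alpha>'] poch0_chmul[OF \<gamma> \<alpha>']
        poch_chinv[OF D \<nu>] poch0_chinv[OF A \<nu>])
  have "poch \<psi> A \<nu> \<noteq> 0" "poch0 \<psi> D \<nu> \<noteq> 0" "poch0 \<psi> \<gamma> (chinv \<alpha>) \<noteq> 0"
    using gauss_nonzero[OF chmul_in_mult_chars[OF A \<nu>]] gauss_nonzero[OF A]
      gauss0_nonzero[OF chmul_in_mult_chars[OF D \<nu>]] gauss0_nonzero[OF D]
      gauss0_nonzero[OF chmul_in_mult_chars[OF \<gamma> \<alpha>']] gauss0_nonzero[OF \<gamma>]
    by (simp_all add: poch_def poch0_def)
  then show ?thesis
    unfolding A_def[symmetric] D_def[symmetric] numerator denominator
    using mult_char_nonzero[OF \<nu>, of "-1"] by (simp add: field_simps)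
qed

section \<open>Summation and transformation formulas\<close>

text \<open>The finite field analogue of Euler's integral representation of \<open>\<^sub>2F\<^sub>1\<close>.\<close>

lemma hyp2F1_eq_char_sum:
  assumes a: "a \<in> mult_chars" and b: "b \<in> mult_chars" and c: "c \<in> mult_chars"
    and bc: "chmul (chinv b) c \<noteq> eps_char" and z: "z \<noteq> 0"
  shows "hyp2F1 \<psi> a b c z = gauss0 \<psi> c / (gauss \<psi> b * gauss \<psi> (chmul (chinv b) c)) *
    ((of_nat (card (UNIV :: 'a set)) - 1) * of_nat (delta_char a) * b (inverse z)
        * chmul (chinv b) c (1 - inverse z)
     - (\<Sum>x\<in>UNIV. b x * chmul (chinv b) c (1 - x) * chinv a (1 - z * x)))"
proof -
  define q :: complex where "q = of_nat (card (UNIV :: 'a set))"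
  define F where "F x = b x * chmul (chinv b) c (1 - x)" for x
  define G where "G u = a (u / (u - 1))" for u
  define K where "K = - gauss0 \<psi> c / (gauss \<psi> b * gauss \<psi> (chmul (chinv b) c))"
  define D where "D = (q - 1) * of_nat (delta_char a)"
  have F0: "F 0 = 0" using mult_char_zero[OF b] by (simp add: F_def)
  have summand: "poch \<psi> a \<nu> * poch \<psi> b \<nu> / (poch0 \<psi> eps_char \<nu> * poch0 \<psi> c \<nu>) * \<nu> z
      = K * ((D - (\<Sum>u\<in>UNIV. G u * \<nu> u)) * (\<Sum>x\<in>UNIV. F x * \<nu> x) * \<nu> z)"
    if \<nu>: "\<nu> \<in> mult_chars" for \<nu>
  proof -
    have "poch \<psi> a \<nu> * poch \<psi> b \<nu> / (poch0 \<psi> eps_char \<nu> * poch0 \<psi> c \<nu>) * \<nu> z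
        = (poch \<psi> a \<nu> / poch0 \<psi> eps_char \<nu>) * (poch \<psi> b \<nu> / poch0 \<psi> c \<nu>) * \<nu> z"
      by simp
    also have "\<dots> = K * ((D - (\<Sum>u\<in>UNIV. G u * \<nu> u)) * (\<Sum>x\<in>UNIV. F x * \<nu> x) * \<nu> z)"
      unfolding poch_div_poch0_eps_char[OF a \<nu>] poch_div_poch0[OF b c \<nu> bc]
      by (simp add: D_def G_def K_def F_def q_def)
    finally show ?thesis .
  qed
  have "(\<Sum>\<nu>\<in>mult_chars. poch \<psi> a \<nu> * poch \<psi> b \<nu> / (poch0 \<psi> eps_char \<nu> * poch0 \<psi> c \<nu>) * \<nu> z)
      = (\<Sum>\<nu>\<in>mult_chars. K * ((D - (\<Sum>u\<in>UNIV. G u * \<nu> u)) * (\<Sum>x\<in>UNIV. F x * \<nu> x) * \<nu> z))"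
    by (rule sum.cong[OF refl summand])
  also have "\<dots> = K * (q - 1) * (D * F (inverse z) - (\<Sum>x\<in>UNIV. F x * G (inverse (x * z))))"
    unfolding sum_distrib_left[symmetric]
      sum_mult_chars_expansion_diff[where F = F and G = G and d = D, OF z F0]
    by (simp only: q_def mult.assoc)
  also have "(\<Sum>x\<in>UNIV. F x * G (inverse (x * z))) = (\<Sum>x\<in>UNIV. F x * chinv a (1 - z * x))"
  proof (rule sum.cong[OF refl])
    fix x
    show "F x * G (inverse (x * z)) = F x * chinv a (1 - z * x)"
      using z chinv_apply_one_minus[OF a, of "z * x"] F0
      by (cases "x = 0") (simp_all add: G_def mult.commute)
  qed
  finally have sum_eq:
    "(\<Sum>\<nu>\<in>mult_chars. poch \<psi> a \<nu> * poch \<psi> b \<nu> / (poch0 \<psi> eps_char \<nu> * poch0 \<psi> c \<nu>) * \<nu> z)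
      = K * (q - 1) * (D * F (inverse z) - (\<Sum>x\<in>UNIV. F x * chinv a (1 - z * x)))" .
  have "1 / (1 - q) * (K * (q - 1) * t) = - K * t" for t
    using card_UNIV_field_ge_two[where 'a='a] by (simp add: q_def field_simps)
  then have "hyp2F1 \<psi> a b c z = - K * (D * F (inverse z) - (\<Sum>x\<in>UNIV. F x * chinv a (1 - z * x)))"
    unfolding hyp2F1_def q_def[symmetric] sum_eq .
  then show ?thesis by (simp add: K_def D_def F_def q_def mult.assoc)
qed

lemma hyp2F1_one:
  assumes a: "a \<in> mult_chars" and b: "b \<in> mult_chars" and c: "c \<in> mult_chars"
    and b_ne: "b \<noteq> eps_char" and bc: "chmul (chinv b) c \<noteq> eps_char"
  shows "hyp2F1 \<psi> a b c 1 = poch \<psi> (chmul (chinv b) c) (chinv a) / poch0 \<psi> c (chinv a)"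
proof -
  define B where "B = chmul (chinv b) c"
  define E where "E = chmul B (chinv a)"
  have B: "B \<in> mult_chars" unfolding B_def using b c by (simp add: chmul_in_mult_chars chinv_in_mult_chars)
  have E: "E \<in> mult_chars" unfolding E_def using B a by (simp add: chmul_in_mult_chars chinv_in_mult_chars)
  have ca: "chmul c (chinv a) \<in> mult_chars" using a c by (simp add: chmul_in_mult_chars chinv_in_mult_chars)
  have "chmul E b = chmul c (chinv a)"
    by (rule mult_chars_eqI[OF chmul_in_mult_chars[OF E b] ca])
      (simp add: E_def B_def chmul_def chinv_def mult_char_nonzero[OF b])
  then have jacobi: "- jacobi_sum E b = gauss \<psi> E * gauss \<psi> b / gauss0 \<psi> (chmul c (chinv a))"
    using gauss_mult_gauss_eq_jacobi[OF E b b_ne] gauss0_nonzero[OF ca] by (simp add: field_simps)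
  have "(\<Sum>x\<in>UNIV. b x * B (1 - x) * chinv a (1 - x)) = jacobi_sum E b"
    by (subst jacobi_sum_commute) (simp add: jacobi_sum_def E_def chmul_def mult_ac)
  then have "hyp2F1 \<psi> a b c 1 = gauss0 \<psi> c / (gauss \<psi> b * gauss \<psi> B) * (- jacobi_sum E b)"
    using hyp2F1_eq_char_sum[OF a b c bc, of 1] mult_char_zero[OF B] by (simp add: B_def)
  then show ?thesis
    unfolding jacobi using gauss_nonzero[OF b] gauss_nonzero[OF B] gauss0_nonzero[OF c]
    by (simp add: poch_def poch0_def E_def B_def field_simps)
qed

lemma hyp2F1_pfaff:
  assumes a: "a \<in> mult_chars" and b: "b \<in> mult_chars" and c: "c \<in> mult_chars"
    and b_ne: "b \<noteq> eps_char" and bc: "chmul (chinv b) c \<noteq> eps_char" and z1: "z \<noteq> 1"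
  shows "hyp2F1 \<psi> a b c z = chinv a (1 - z) * hyp2F1 \<psi> a (chmul (chinv b) c) c (z / (z - 1))"
proof (cases "z = 0")
  case True
  then show ?thesis by (simp add: hyp2F1_zero)
next
  case False
  define B where "B = chmul (chinv b) c"
  define w where "w = z / (z - 1)"
  define K where "K = gauss0 \<psi> c / (gauss \<psi> b * gauss \<psi> B)"
  define V where "V = (of_nat (card (UNIV :: 'a set)) - 1) * of_nat (delta_char a)
    * b (inverse z) * B (1 - inverse z)"
  define T where "T = (\<Sum>x\<in>UNIV. b x * B (1 - x) * chinv a (1 - z * x))"
  have B: "B \<in> mult_chars" unfolding B_def using b c by (simp add: chmul_in_mult_chars chinv_in_mult_chars)
  have BB: "chmul (chinv B) c = b"
    by (rule mult_chars_eqI[OF chmul_in_mult_chars[OF chinv_in_mult_chars[OF B] c] b])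
      (simp add: B_def chmul_def chinv_def mult_char_nonzero[OF c])
  have z1': "1 - z \<noteq> 0" using z1 by simp
  have w0: "w \<noteq> 0" and iw: "inverse w = 1 - inverse z"
    using False z1 by (simp_all add: w_def field_simps)
  have "(\<Sum>x\<in>UNIV. B x * b (1 - x) * chinv a (1 - w * x)) = a (1 - z) * T"
    unfolding w_def T_def by (rule sum_pfaff_reindex[OF a z1])
  then have rhs: "hyp2F1 \<psi> a B c w = K * (V - a (1 - z) * T)"
    using hyp2F1_eq_char_sum[OF a B c _ w0] b_ne
    by (simp add: BB iw K_def V_def mult.commute)
  have lhs: "hyp2F1 \<psi> a b c z = K * (V - T)"
    using hyp2F1_eq_char_sum[OF a b c bc False] by (simp add: K_def V_def T_def B_def)
  have "chinv a (1 - z) * V = V"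
    using z1' by (cases "a = eps_char") (simp_all add: V_def delta_char_def eps_char_def chinv_def)
  moreover have "chinv a (1 - z) * a (1 - z) = 1"
    using mult_char_nonzero[OF a z1'] by (simp add: chinv_def)
  ultimately show ?thesis
    unfolding lhs rhs[unfolded B_def w_def] by (simp add: algebra_simps)
qed

lemma hyp2F1_pfaff_chmul:
  assumes \<alpha>: "\<alpha> \<in> mult_chars" and \<nu>: "\<nu> \<in> mult_chars" and b: "b \<in> mult_chars"
    and c: "c \<in> mult_chars" and b_ne: "b \<noteq> eps_char" and bc: "chmul (chinv b) c \<noteq> eps_char"
    and z1: "z \<noteq> 1"
  shows "\<nu> (1 - z) * hyp2F1 \<psi> (chmul \<alpha> \<nu>) b c z
    = chinv \<alpha> (1 - z) * hyp2F1 \<psi> (chmul \<alpha> \<nu>) (chmul (chinv b) c) c (z / (z - 1))"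
proof -
  have "\<nu> (1 - z) * chinv (chmul \<alpha> \<nu>) (1 - z) = chinv \<alpha> (1 - z)"
    using mult_char_nonzero[OF \<nu>, of "1 - z"] z1 by (simp add: chinv_def chmul_def)
  then show ?thesis
    using hyp2F1_pfaff[OF chmul_in_mult_chars[OF \<alpha> \<nu>] b c b_ne bc z1]
    by (simp add: mult.assoc[symmetric])
qed

lemma appellF2_eq_sum_hyp2F1:
  assumes \<alpha>: "\<alpha> \<in> mult_chars"
  shows "appellF2 \<psi> \<alpha> \<beta>1 \<beta>2 \<gamma>1 \<gamma>2 x y = 1 / (1 - of_nat (card (UNIV :: 'a set))) *
    (\<Sum>\<nu>\<in>mult_chars. poch \<psi> \<alpha> \<nu> * poch \<psi> \<beta>1 \<nu> / (poch0 \<psi> eps_char \<nu> * poch0 \<psi> \<gamma>1 \<nu>) * \<nu> x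
      * hyp2F1 \<psi> (chmul \<alpha> \<nu>) \<beta>2 \<gamma>2 y)"
proof -
  define q :: complex where "q = of_nat (card (UNIV :: 'a set))"
  have inner: "(\<Sum>\<mu>\<in>mult_chars. poch \<psi> \<alpha> (chmul \<nu> \<mu>) * poch \<psi> \<beta>1 \<nu> * poch \<psi> \<beta>2 \<mu>
        / (poch0 \<psi> \<gamma>1 \<nu> * poch0 \<psi> \<gamma>2 \<mu> * poch0 \<psi> eps_char \<nu> * poch0 \<psi> eps_char \<mu>) * \<nu> x * \<mu> y)
      = (1 - q) * (poch \<psi> \<alpha> \<nu> * poch \<psi> \<beta>1 \<nu> / (poch0 \<psi> eps_char \<nu> * poch0 \<psi> \<gamma>1 \<nu>) * \<nu> x
        * hyp2F1 \<psi> (chmul \<alpha> \<nu>) \<beta>2 \<gamma>2 y)"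
    if \<nu>: "\<nu> \<in> mult_chars" for \<nu>
    using card_UNIV_field_ge_two[where 'a='a]
    by (simp add: hyp2F1_def poch_chmul[OF \<alpha> \<nu>] sum_distrib_left q_def mult_ac)
  have "appellF2 \<psi> \<alpha> \<beta>1 \<beta>2 \<gamma>1 \<gamma>2 x y = 1 / (1 - q)^2 * (\<Sum>\<nu>\<in>mult_chars. (1 - q) *
      (poch \<psi> \<alpha> \<nu> * poch \<psi> \<beta>1 \<nu> / (poch0 \<psi> eps_char \<nu> * poch0 \<psi> \<gamma>1 \<nu>) * \<nu> x
        * hyp2F1 \<psi> (chmul \<alpha> \<nu>) \<beta>2 \<gamma>2 y))"
    unfolding appellF2_def q_def[symmetric] by (rule arg_cong[where f = "(*) _"], rule sum.cong[OF refl inner])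
  also have "\<dots> = 1 / (1 - q)^2 * ((1 - q) * (\<Sum>\<nu>\<in>mult_chars.
      poch \<psi> \<alpha> \<nu> * poch \<psi> \<beta>1 \<nu> / (poch0 \<psi> eps_char \<nu> * poch0 \<psi> \<gamma>1 \<nu>) * \<nu> x
        * hyp2F1 \<psi> (chmul \<alpha> \<nu>) \<beta>2 \<gamma>2 y))"
    by (simp only: sum_distrib_left)
  also have "1 / (1 - q)^2 * ((1 - q) * t) = 1 / (1 - q) * t" for t
    using card_UNIV_field_ge_two[where 'a='a] by (simp add: q_def power2_eq_square)
  finally show ?thesis by (simp only: q_def)
qed

lemma appellF2_at_one:
  assumes \<alpha>: "\<alpha> \<in> mult_chars" and \<beta>2: "\<beta>2 \<in> mult_chars" and \<gamma>2: "\<gamma>2 \<in> mult_chars"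
    and \<beta>2_ne: "\<beta>2 \<noteq> eps_char" and \<beta>2\<gamma>2: "chmul \<beta>2 (chinv \<gamma>2) \<noteq> eps_char"
  shows "appellF2 \<psi> \<alpha> \<beta>1 \<beta>2 \<gamma>1 \<gamma>2 z 1 =
    poch \<psi> (chmul (chinv \<beta>2) \<gamma>2) (chinv \<alpha>) / poch0 \<psi> \<gamma>2 (chinv \<alpha>) *
    hyp3F2 \<psi> \<alpha> \<beta>1 (chmul \<alpha> (chinv \<gamma>2)) \<gamma>1 (chmul (chmul \<alpha> \<beta>2) (chinv \<gamma>2)) z"
proof -
  have ne: "chmul (chinv \<beta>2) \<gamma>2 \<noteq> eps_char"
    using \<beta>2\<gamma>2 by (simp add: chmul_chinv_eq_eps_char_iff)
  have "hyp2F1 \<psi> (chmul \<alpha> \<nu>) \<beta>2 \<gamma>2 1 =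
      poch \<psi> (chmul (chinv \<beta>2) \<gamma>2) (chinv \<alpha>) / poch0 \<psi> \<gamma>2 (chinv \<alpha>) *
      (poch \<psi> (chmul \<alpha> (chinv \<gamma>2)) \<nu> / poch0 \<psi> (chmul (chmul \<alpha> \<beta>2) (chinv \<gamma>2)) \<nu>)"
    if \<nu>: "\<nu> \<in> mult_chars" for \<nu>
    using hyp2F1_one[OF chmul_in_mult_chars[OF \<alpha> \<nu>] \<beta>2 \<gamma>2 \<beta>2_ne ne]
      poch_div_poch0_chinv_chmul[OF \<alpha> \<beta>2 \<gamma>2 \<nu>] by simp
  then show ?thesis
    by (simp add: appellF2_eq_sum_hyp2F1[OF \<alpha>] hyp3F2_def sum_distrib_left mult_ac cong: sum.cong)
qed

lemma appellF2_at_one_minus: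
  assumes \<alpha>: "\<alpha> \<in> mult_chars" and \<beta>1: "\<beta>1 \<in> mult_chars" and \<beta>2: "\<beta>2 \<in> mult_chars"
    and \<gamma>1: "\<gamma>1 \<in> mult_chars" and \<gamma>2: "\<gamma>2 \<in> mult_chars"
    and \<beta>1_ne: "\<beta>1 \<noteq> eps_char" and \<beta>1\<gamma>1: "chmul \<beta>1 (chinv \<gamma>1) \<noteq> eps_char"
    and \<beta>2_ne: "\<beta>2 \<noteq> eps_char" and \<beta>2\<gamma>2: "chmul \<beta>2 (chinv \<gamma>2) \<noteq> eps_char"
    and z1: "z \<noteq> 1"
  shows "appellF2 \<psi> \<alpha> \<beta>1 \<beta>2 \<gamma>1 \<gamma>2 z (1 - z) =
    poch \<psi> (chmul (chinv \<beta>2) \<gamma>2) (chinv \<alpha>) / poch0 \<psi> \<gamma>2 (chinv \<alpha>) * chinv \<alpha> (1 - z) *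
    hyp3F2 \<psi> \<alpha> (chmul (chinv \<beta>1) \<gamma>1) (chmul \<alpha> (chinv \<gamma>2)) \<gamma>1
      (chmul (chmul \<alpha> \<beta>2) (chinv \<gamma>2)) (z / (z - 1))"
proof -
  define B where "B = chmul (chinv \<beta>1) \<gamma>1"
  define R where "R \<nu> = poch \<psi> \<alpha> \<nu> * poch \<psi> \<beta>2 \<nu> / (poch0 \<psi> eps_char \<nu> * poch0 \<psi> \<gamma>2 \<nu>)"
    for \<nu> :: "'a \<Rightarrow> complex"
  have B_ne: "chmul (chinv \<beta>1) \<gamma>1 \<noteq> eps_char"
    using \<beta>1\<gamma>1 by (simp add: chmul_chinv_eq_eps_char_iff)
  have "appellF2 \<psi> \<alpha> \<beta>1 \<beta>2 \<gamma>1 \<gamma>2 z (1 - z)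
      = 1 / (1 - of_nat (card (UNIV :: 'a set))) *
        (\<Sum>\<nu>\<in>mult_chars. R \<nu> * (\<nu> (1 - z) * hyp2F1 \<psi> (chmul \<alpha> \<nu>) \<beta>1 \<gamma>1 z))"
    by (simp add: appellF2_swap[of _ _ \<beta>1] appellF2_eq_sum_hyp2F1[OF \<alpha>] R_def mult.assoc)
  also have "\<dots> = chinv \<alpha> (1 - z) * (1 / (1 - of_nat (card (UNIV :: 'a set))) *
        (\<Sum>\<nu>\<in>mult_chars. R \<nu> * \<nu> 1 * hyp2F1 \<psi> (chmul \<alpha> \<nu>) B \<gamma>1 (z / (z - 1))))"
    \<comment> \<open>the factor \<open>\<nu> 1 = 1\<close> is kept to match the expansion of \<open>F\<^sub>2\<close> at first argument \<open>1\<close>\<close>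
    by (simp add: hyp2F1_pfaff_chmul[OF \<alpha> _ \<beta>1 \<gamma>1 \<beta>1_ne B_ne z1] B_def mult_char_one
        sum_distrib_left mult_ac cong: sum.cong)
  also have "\<dots> = chinv \<alpha> (1 - z) * appellF2 \<psi> \<alpha> B \<beta>2 \<gamma>1 \<gamma>2 (z / (z - 1)) 1"
    by (simp add: appellF2_swap[of _ _ B] appellF2_eq_sum_hyp2F1[OF \<alpha>] R_def)
  also have "appellF2 \<psi> \<alpha> B \<beta>2 \<gamma>1 \<gamma>2 (z / (z - 1)) 1 =
      poch \<psi> (chmul (chinv \<beta>2) \<gamma>2) (chinv \<alpha>) / poch0 \<psi> \<gamma>2 (chinv \<alpha>) *
      hyp3F2 \<psi> \<alpha> B (chmul \<alpha> (chinv \<gamma>2)) \<gamma>1 (chmul (chmul \<alpha> \<beta>2) (chinv \<gamma>2)) (z / (z - 1))"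
    by (rule appellF2_at_one[OF \<alpha> \<beta>2 \<gamma>2 \<beta>2_ne \<beta>2\<gamma>2])
  finally show ?thesis by (simp add: B_def mult_ac)
qed

end

end

theorem theorem3p13:
  fixes \<psi> :: "'a::{field,finite} \<Rightarrow> complex"
    and \<alpha> \<beta>1 \<beta>2 \<gamma>1 \<gamma>2 :: "'a \<Rightarrow> complex"
  assumes psi: "add_char \<psi>" "\<exists>x. \<psi> x \<noteq> 1"
    and chars: "\<alpha> \<in> mult_chars" "\<beta>1 \<in> mult_chars" "\<beta>2 \<in> mult_chars"
      "\<gamma>1 \<in> mult_chars" "\<gamma>2 \<in> mult_chars"
  shows
    "(eps_char \<notin> {\<alpha>, \<beta>2, chmul \<beta>1 (chinv \<gamma>1), chmul \<beta>2 (chinv \<gamma>2)} \<longrightarrow>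
       (\<forall>z::'a. appellF2 \<psi> \<alpha> \<beta>1 \<beta>2 \<gamma>1 \<gamma>2 z 1 =
          poch \<psi> (chmul (chinv \<beta>2) \<gamma>2) (chinv \<alpha>) / poch0 \<psi> \<gamma>2 (chinv \<alpha>) *
          hyp3F2 \<psi> \<alpha> \<beta>1 (chmul \<alpha> (chinv \<gamma>2)) \<gamma>1 (chmul (chmul \<alpha> \<beta>2) (chinv \<gamma>2)) z))
     \<and>
     (eps_char \<notin> {\<alpha>, \<beta>1, \<beta>2, chmul \<beta>1 (chinv \<gamma>1), chmul \<beta>2 (chinv \<gamma>2)} \<longrightarrow>
       (\<forall>z::'a. z \<noteq> 1 \<longrightarrow>
          appellF2 \<psi> \<alpha> \<beta>1 \<beta>2 \<gamma>1 \<gamma>2 z (1 - z) =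
          poch \<psi> (chmul (chinv \<beta>2) \<gamma>2) (chinv \<alpha>) / poch0 \<psi> \<gamma>2 (chinv \<alpha>) *
          chinv \<alpha> (1 - z) *
          hyp3F2 \<psi> \<alpha> (chmul (chinv \<beta>1) \<gamma>1) (chmul \<alpha> (chinv \<gamma>2)) \<gamma>1
            (chmul (chmul \<alpha> \<beta>2) (chinv \<gamma>2)) (z / (z - 1))))"
  \<comment> \<open>neither identity needs \<open>\<alpha> \<noteq> \<epsilon>\<close>, and (i) does not need \<open>\<beta>\<^sub>1\<gamma>\<^sub>1\<inverse> \<noteq> \<epsilon>\<close>\<close>
  using appellF2_at_one[OF psi chars(1,3,5)] appellF2_at_one_minus[OF psi chars] by auto

end
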